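(* Let $\mathcal{A}$ be a u-MPS core tensor and $R$ a (possibly ambiguous) regex such that the generalized right transfer operator $\mathcal{E}^r_R$ converges. Let $Q_\ell,Q_r\in\mathbb{R}^{D\times D}$ be positive semidefinite with $\mathcal{Z}_R(Q_\ell,Q_r)>0$ (and assume all normalization constants encountered by the algorithm are positive). Then the random string output by $\mathrm{SAMPLE}(R,Q_\ell,Q_r)$ has distribution $$P_R(s,Q_\ell,Q_r)=|s|_R\,\frac{\tilde P(s,Q_\ell,Q_r)}{\mathcal{Z}_R(Q_\ell,Q_r)},\qquad s\in\Sigma^*,$$ where $\tilde P(s,Q_\ell,Q_r)=\mathrm{Tr}(Q_\ell\,\mathcal{E}^r_s(Q_r))=\mathrm{Tr}(Q_\ell\mathcal{A}(s)Q_r\mathcal{A}(s)^T)$ and $\mathcal{Z}_R(Q_\ell,Q_r)=\mathrm{Tr}(Q_\ell\,\mathcal{E}^r_R(Q_r))$.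
   Context: A u-MPS core tensor $\mathcal{A}$ of shape $(D,d,D)$ over a finite alphabet $\Sigma$ of size $d$ assigns to each $c\in\Sigma$ a matrix $\mathcal{A}(c)\in\mathbb{R}^{D\times D}$; for $s=s_1\cdots s_n$, $\mathcal{A}(s)=\mathcal{A}(s_1)\cdots\mathcal{A}(s_n)$, $\mathcal{A}(\varepsilon)=I$. Regex are syntax trees built from characters $c\in\Sigma$, concatenations $R_1R_2$, unions $R_1|R_2$, Kleene closures $S^*$. Match counts: $|s|_c=1$ if $s=c$, else $0$; $|s|_{R_1R_2}=\sum_{s_1s_2=s}|s_1|_{R_1}|s_2|_{R_2}$; $|s|_{R_1|R_2}=|s|_{R_1}+|s|_{R_2}$; $|s|_{S^*}=\sum_{n\ge0}\sum_{s_1\cdots s_n=s}\prod_i|s_i|_S$ (the $n=0$ term being $1$ iff $s=\varepsilon$). Generalized transfer operators: $\mathcal{E}^r_c(Q)=\mathcal{A}(c)Q\mathcal{A}(c)^T$, $\mathcal{E}^\ell_c(Q)=\mathcal{A}(c)^TQ\mathcal{A}(c)$; $\mathcal{E}^r_{R_1R_2}=\mathcal{E}^r_{R_1}\circ\mathcal{E}^r_{R_2}$, $\mathcal{E}^\ell_{R_1R_2}=\mathcal{E}^\ell_{R_2}\circ\mathcal{E}^\ell_{R_1}$; unions give sums; $\mathcal{E}^r_{S^*}=\sum_{n\ge0}(\mathcal{E}^r_S)^{\circ n}$, $\mathcal{E}^\ell_{S^*}=\sum_{n\ge0}(\mathcal{E}^\ell_S)^{\circ n}$. A literal string $s$ is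 treated as the concatenation of its characters, so $\mathcal{E}^r_s(Q)=\mathcal{A}(s)Q\mathcal{A}(s)^T$, $\mathcal{E}^\ell_s(Q)=\mathcal{A}(s)^TQ\mathcal{A}(s)$. $\mathcal{E}^r_R$ converges if all Kleene-closure series in its recursive definition converge. Define $\mathcal{Z}_R(Q_\ell,Q_r)=\mathrm{Tr}(Q_\ell\mathcal{E}^r_R(Q_r))$. The randomized procedure $\mathrm{SAMPLE}(R,Q_\ell,Q_r)$ is defined recursively: (i) if $R=c$, return $c$; (ii) if $R=R_1R_2$, let $s_1=\mathrm{SAMPLE}(R_1,Q_\ell,\mathcal{E}^r_{R_2}(Q_r))$, then $s_2=\mathrm{SAMPLE}(R_2,\mathcal{E}^\ell_{s_1}(Q_\ell),Q_r)$, and return $s_1s_2$; (iii) if $R=R_1|R_2$, choose $i\in\{1,2\}$ with probability $\mathcal{Z}_{R_i}(Q_\ell,Q_r)/\mathcal{Z}_{R_1|R_2}(Q_\ell,Q_r)$ and return $\mathrm{SAMPLE}(R_i,Q_\ell,Q_r)$; (iv) if $R=S^*$, with probability $p_{\mathrm{HALT}}=\mathrm{Tr}(Q_\ell Q_r)/\mathcal{Z}_{S^*}(Q_\ell,Q_r)$ return the empty string $\varepsilon$, and otherwise (probability $1-p_{\mathrm{HALT}}$) return $\mathrm{SAMPLE}(SS^*,Q_\ell,Q_r)$, where $SS^*$ is the concatenation of $S$ with $S^*$. All random choices are independent. *)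

theory Defs
  imports "HOL-Analysis.Analysis" "HOL-Probability.Probability"
begin

datatype 'c regex = Chr 'c | Cat "'c regex" "'c regex" | Alt "'c regex" "'c regex" | Star "'c regex"

(* Match count |s|_R, valued in [0,\<infinity>] (Kleene-star counts are infinite sums) *)
primrec cnt :: "'c regex \<Rightarrow> 'c list \<Rightarrow> ennreal" where
  "cnt (Chr c) s = (if s = [c] then 1 else 0)"
| "cnt (Cat R1 R2) s = (\<Sum>i\<in>{0..length s}. cnt R1 (take i s) * cnt R2 (drop i s))"
| "cnt (Alt R1 R2) s = cnt R1 s + cnt R2 s"
| "cnt (Star S) s =
     (\<Sum>n. \<Sum>ss\<in>{ss. length ss = n \<and> concat ss = s}. prod_list (map (cnt S) ss))"

definition Astr :: "('c \<Rightarrow> real^'n^'n) \<Rightarrow> 'c list \<Rightarrow> real^'n^'n" where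
  "Astr A s = foldr (\<lambda>c M. A c ** M) s (mat 1)"

primrec Er :: "('c \<Rightarrow> real^'n^'n) \<Rightarrow> 'c regex \<Rightarrow> real^'n^'n \<Rightarrow> real^'n^'n" where
  "Er A (Chr c) Q = A c ** Q ** transpose (A c)"
| "Er A (Cat R1 R2) Q = Er A R1 (Er A R2 Q)"
| "Er A (Alt R1 R2) Q = Er A R1 Q + Er A R2 Q"
| "Er A (Star S) Q = (\<Sum>n. (Er A S ^^ n) Q)"

primrec Er_converges :: "('c \<Rightarrow> real^'n^'n) \<Rightarrow> 'c regex \<Rightarrow> bool" where
  "Er_converges A (Chr c) = True"
| "Er_converges A (Cat R1 R2) = (Er_converges A R1 \<and> Er_converges A R2)"
| "Er_converges A (Alt R1 R2) = (Er_converges A R1 \<and> Er_converges A R2)"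
| "Er_converges A (Star S) = (Er_converges A S \<and> (\<forall>Q. summable (\<lambda>n. (Er A S ^^ n) Q)))"

definition El_str :: "('c \<Rightarrow> real^'n^'n) \<Rightarrow> 'c list \<Rightarrow> real^'n^'n \<Rightarrow> real^'n^'n" where
  "El_str A s Q = transpose (Astr A s) ** Q ** Astr A s"

definition Zf :: "('c \<Rightarrow> real^'n^'n) \<Rightarrow> 'c regex \<Rightarrow> real^'n^'n \<Rightarrow> real^'n^'n \<Rightarrow> real" where
  "Zf A R Ql Qr = trace (Ql ** Er A R Qr)"

definition Ptilde :: "('c \<Rightarrow> real^'n^'n) \<Rightarrow> 'c list \<Rightarrow> real^'n^'n \<Rightarrow> real^'n^'n \<Rightarrow> real" where
  "Ptilde A s Ql Qr = trace (Ql ** (Astr A s ** Qr ** transpose (Astr A s)))"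

definition psd :: "real^'n^'n \<Rightarrow> bool" where
  "psd Q \<longleftrightarrow> transpose Q = Q \<and> (\<forall>x. 0 \<le> x \<bullet> (Q *v x))"

(* The randomized procedure SAMPLE, as a (sub)probability distribution on outputs
   (least fixed point: non-terminating runs lose mass). *)
partial_function (spmf) sample ::
  "('c \<Rightarrow> real^'n^'n) \<Rightarrow> 'c regex \<Rightarrow> real^'n^'n \<Rightarrow> real^'n^'n \<Rightarrow> 'c list spmf" where
  "sample A R Ql Qr = (case R of
     Chr c \<Rightarrow> return_spmf [c]
   | Cat R1 R2 \<Rightarrow>
       bind_spmf (sample A R1 Ql (Er A R2 Qr)) (\<lambda>s1.
       bind_spmf (sample A R2 (El_str A s1 Ql) Qr) (\<lambda>s2.
       return_spmf (s1 @ s2)))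
   | Alt R1 R2 \<Rightarrow>
       bind_spmf (spmf_of_pmf (bernoulli_pmf (Zf A R1 Ql Qr / Zf A (Alt R1 R2) Ql Qr)))
         (\<lambda>b. if b then sample A R1 Ql Qr else sample A R2 Ql Qr)
   | Star S \<Rightarrow>
       bind_spmf (spmf_of_pmf (bernoulli_pmf (trace (Ql ** Qr) / Zf A (Star S) Ql Qr)))
         (\<lambda>halt. if halt then return_spmf [] else sample A (Cat S (Star S)) Ql Qr))"

end

theory Submission
  imports Defs
begin

text \<open>By induction on the regex (and, inside a Kleene star, on the length of the string) one shows
  \<open>Zf A R Ql Qr * spmf (sample A R Ql Qr) s = cnt R s * Ptilde A s Ql Qr\<close> for all positive
  semidefinite \<open>Ql\<close>, \<open>Qr\<close>. Multiplying by the normaliser keeps the identity meaningful for recursive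
  calls whose normaliser vanishes. Unions and stars are Bernoulli mixtures whose weights are the summands
  of \<open>Zf\<close>. For a concatenation the normalisers telescope, because the normaliser of the second call,
  \<open>Zf A R2 (El_str A s1 Ql) Qr\<close>, equals \<open>Ptilde A s1 Ql (Er A R2 Qr)\<close>. The star recursion is well
  founded on \<open>s\<close> since convergence of \<open>Er A (Star S)\<close> forces \<open>cnt S [] = 0\<close>. All weights are
  nonnegative because \<open>trace (P ** Q) \<ge> 0\<close> for positive semidefinite \<open>P\<close>, \<open>Q\<close>, proved by Cholesky
  elimination.\<close>

section \<open>Positive semidefinite matrices\<close>

lemma psd_sym: "psd (P::real^'n^'n) \<Longrightarrow> P$i$j = P$j$i"
  unfolding psd_def by (metis transpose_def vec_lambda_beta)

lemma quadratic_form_expand: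
  "(x::real^'n) \<bullet> ((P::real^'n^'n) *v x) = (\<Sum>i\<in>UNIV. \<Sum>j\<in>UNIV. x$i * P$i$j * x$j)"
  by (simp add: inner_vec_def matrix_vector_mult_def sum_distrib_left mult.assoc)

lemma psd_diag_nonneg: "psd (P::real^'n^'n) \<Longrightarrow> 0 \<le> P$k$k"
proof -
  assume "psd P"
  then have "0 \<le> axis k 1 \<bullet> (P *v axis k 1)" unfolding psd_def by blast
  then show ?thesis by (simp add: inner_axis' matrix_vector_mult_basis column_def)
qed

lemma psd_zero_diag_row:
  fixes P :: "real^'n^'n"
  assumes "psd P" "P$k$k = 0"
  shows "P$k$j = 0"
proof (rule ccontr)
  assume ne: "P$k$j \<noteq> 0"
  then have jk: "j \<noteq> k" using assms by auto
  define t where "t = - (P$j$j + 1) / (2 * P$k$j)"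
  define x where "x = (\<chi> i. if i = k then t else if i = j then 1 else (0::real))"
  have "(\<Sum>i\<in>UNIV. \<Sum>l\<in>UNIV. x$i * P$i$l * x$l) = (\<Sum>i\<in>UNIV. \<Sum>l\<in>{k,j}. x$i * P$i$l * x$l)"
    by (intro sum.cong refl sum.mono_neutral_right) (auto simp: x_def)
  also have "\<dots> = (\<Sum>i\<in>{k,j}. \<Sum>l\<in>{k,j}. x$i * P$i$l * x$l)"
    by (rule sum.mono_neutral_right) (auto simp: x_def)
  also have "\<dots> = 2 * t * P$k$j + P$j$j"
    using jk assms psd_sym[OF assms(1), of j k] by (simp add: x_def algebra_simps)
  also have "\<dots> = -1" using ne by (simp add: t_def field_simps)
  finally have "x \<bullet> (P *v x) = -1" by (simp only: quadratic_form_expand)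
  then show False using assms(1) unfolding psd_def by (metis neg_0_le_iff_le not_one_le_zero)
qed

text \<open>One step of Cholesky elimination (the Schur complement of the pivot \<open>P$k$k\<close>). The test vector
  \<open>y\<close> below is \<open>x\<close> moved along \<open>axis k\<close> to the minimiser of the quadratic form of \<open>P\<close>.\<close>

lemma psd_eliminate_pivot:
  fixes P :: "real^'n^'n"
  assumes P: "psd P" and pivot: "P$k$k > 0"
  shows "psd (\<chi> i j. P$i$j - P$i$k * P$k$j / P$k$k)"
proof -
  define c where "c = P$k$k"
  have c: "0 < c" using pivot by (simp add: c_def)
  have sym: "P$i$j = P$j$i" for i j using psd_sym[OF P] .
  have "psd (\<chi> i j. P$i$j - P$i$k * P$k$j / c)"
    unfolding psd_def
  proof (intro conjI allI)
    show "transpose (\<chi> i j. P$i$j - P$i$k * P$k$j / c) = (\<chi> i j. P$i$j - P$i$k * P$k$j / c)"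
      by (simp add: vec_eq_iff transpose_def sym mult.commute)
    fix x :: "real^'n"
    define a where "a = (\<Sum>j\<in>UNIV. P$k$j * x$j) / c"
    define y where "y = x - a *\<^sub>R axis k 1"
    have "0 \<le> y \<bullet> (P *v y)" using P unfolding psd_def by blast
    also have "y \<bullet> (P *v y) = x \<bullet> (P *v x) - a * (axis k 1 \<bullet> (P *v x)) - a * (x \<bullet> (P *v axis k 1))
        + a * a * (axis k 1 \<bullet> (P *v axis k 1))"
      by (simp add: y_def matrix_vector_right_distrib matrix_vector_mult_diff_distrib
          inner_diff_left inner_diff_right algebra_simps)
    also have "axis k 1 \<bullet> (P *v x) = c * a"
      using c by (simp add: inner_axis' a_def matrix_vector_mult_def)
    also have "x \<bullet> (P *v axis k 1) = c * a"
      using c by (simp add: inner_vec_def a_def matrix_vector_mult_basis column_def sym[of _ k] mult.commute)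
    also have "axis k 1 \<bullet> (P *v axis k 1) = c"
      by (simp add: inner_axis' matrix_vector_mult_basis column_def c_def)
    also have "x \<bullet> (P *v x) - a * (c * a) - a * (c * a) + a * a * c = x \<bullet> (P *v x) - c * a * a"
      by (simp add: algebra_simps)
    also have "\<dots> = x \<bullet> ((\<chi> i j. P$i$j - P$i$k * P$k$j / c) *v x)"
    proof -
      have "(\<Sum>i\<in>UNIV. \<Sum>j\<in>UNIV. x$i * (P$i$k * P$k$j / c) * x$j)
          = (\<Sum>i\<in>UNIV. x$i * P$k$i) * (\<Sum>j\<in>UNIV. P$k$j * x$j) / c"
        by (simp add: sum_distrib_left sum_distrib_right sum_divide_distrib sym[of _ k] algebra_simps)
      also have "\<dots> = c * a * a" using c by (simp add: a_def mult.commute field_simps)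
      finally show ?thesis
        by (simp add: quadratic_form_expand algebra_simps sum_subtractf)
    qed
    finally show "0 \<le> x \<bullet> ((\<chi> i j. P$i$j - P$i$k * P$k$j / c) *v x)" .
  qed
  then show ?thesis by (simp add: c_def)
qed

lemma matrix_add_rdistrib: "((A::'a::semiring_1^'n^'m) + B) ** C = A ** C + B ** C"
  by (vector matrix_matrix_mult_def sum.distrib[symmetric] field_simps)

lemma trace_rank_one_mult: "trace ((\<chi> i j. v$i * v$j) ** Q) = v \<bullet> (Q *v (v::real^'n))"
proof -
  have "trace ((\<chi> i j. v$i * v$j) ** Q) = (\<Sum>i\<in>UNIV. \<Sum>j\<in>UNIV. v$i * v$j * Q$j$i)"
    by (simp add: trace_def matrix_matrix_mult_def)
  also have "\<dots> = (\<Sum>j\<in>UNIV. v$j * (\<Sum>i\<in>UNIV. Q$j$i * v$i))"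
    by (subst sum.swap) (simp add: sum_distrib_left mult.commute mult.left_commute)
  also have "\<dots> = v \<bullet> (Q *v v)" by (simp add: inner_vec_def matrix_vector_mult_def)
  finally show ?thesis .
qed

lemma trace_psd_mult_nonneg_supported:
  fixes P Q :: "real^'n^'n"
  assumes "finite I" "psd P" "psd Q" "\<And>i j. i \<notin> I \<or> j \<notin> I \<Longrightarrow> P$i$j = 0"
  shows "0 \<le> trace (P ** Q)"
  using assms(1,2,4)
proof (induction I arbitrary: P rule: finite_induct)
  case empty
  then have "P = 0" by (simp add: vec_eq_iff)
  then show ?case by (simp add: trace_def)
next
  case (insert k I)
  have sym: "P$i$j = P$j$i" for i j using psd_sym[OF insert.prems(1)] .
  show ?case
  proof (cases "P$k$k = 0")
    case True
    then have "P$i$j = 0" if "i \<notin> I \<or> j \<notin> I" for i j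
      using that insert.prems psd_zero_diag_row sym by (metis insert_iff)
    then show ?thesis using insert by blast
  next
    case False
    define c where "c = P$k$k"
    have c: "c > 0" using psd_diag_nonneg[OF insert.prems(1), of k] False c_def by simp
    define v where "v = (\<chi> i. P$i$k)"
    define P' where "P' = (\<chi> i j. P$i$j - P$i$k * P$k$j / c)"
    have "0 \<le> trace (P' ** Q)"
    proof (rule insert.IH)
      show "psd P'" using psd_eliminate_pivot[OF insert.prems(1)] c by (simp add: P'_def c_def)
      show "P'$i$j = 0" if "i \<notin> I \<or> j \<notin> I" for i j
        using that c insert.prems(2)[of i j] insert.prems(2)[of i k] insert.prems(2)[of k j]
        by (cases "i = k"; cases "j = k") (auto simp: P'_def c_def sym[of i k])
    qed
    moreover have "0 \<le> trace ((\<chi> i j. v$i * v$j) ** Q)"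
      using assms(3) unfolding trace_rank_one_mult psd_def by blast
    moreover have "P = P' + (1 / c) *\<^sub>R (\<chi> i j. v$i * v$j)"
      using c by (simp add: vec_eq_iff P'_def v_def sym[of k] field_simps)
    then have "trace (P ** Q) = trace (P' ** Q) + (1 / c) * trace ((\<chi> i j. v$i * v$j) ** Q)"
      by (simp add: matrix_add_rdistrib scalar_matrix_assoc[symmetric] trace_add trace_def sum.distrib sum_divide_distrib)
    ultimately show ?thesis using c by simp
  qed
qed

lemma trace_psd_mult_nonneg: "psd P \<Longrightarrow> psd Q \<Longrightarrow> 0 \<le> trace (P ** (Q::real^'n^'n))"
  by (rule trace_psd_mult_nonneg_supported[of UNIV]) simp_all

lemma psd_add: "psd (P::real^'n^'n) \<Longrightarrow> psd Q \<Longrightarrow> psd (P + Q)"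
  unfolding psd_def
  by (simp add: transpose_def vec_eq_iff matrix_vector_mult_add_rdistrib inner_add_right)

lemma psd_congruence: "psd (Q::real^'n^'n) \<Longrightarrow> psd ((M::real^'n^'m) ** Q ** transpose M)"
  unfolding psd_def
  by (simp add: matrix_transpose_mul matrix_mul_assoc matrix_vector_mul_assoc[symmetric]
      dot_lmul_matrix[symmetric])

lemma psd_mat1: "psd (mat 1 :: real^'n^'n)"
  unfolding psd_def by (simp add: transpose_mat)

lemma closed_psd: "closed {Q::real^'n^'n. psd Q}"
proof -
  have "linear (\<lambda>Q::real^'n^'n. Q$i$j)" "linear (\<lambda>Q::real^'n^'n. x \<bullet> (Q *v x))" for i j x
    by (auto intro!: linearI simp: matrix_vector_mult_add_rdistrib inner_add_right
        scaleR_matrix_vector_assoc[symmetric])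
  then have "closed ({Q. \<forall>i j. Q$i$j = Q$j$i} \<inter> {Q::real^'n^'n. \<forall>x. 0 \<le> x \<bullet> (Q *v x)})"
    by (intro closed_Int closed_Collect_all closed_Collect_eq closed_Collect_le
        linear_continuous_on continuous_on_const linear_linear[THEN iffD2])
  moreover have "{Q::real^'n^'n. psd Q} = {Q. \<forall>i j. Q$i$j = Q$j$i} \<inter> {Q. \<forall>x. 0 \<le> x \<bullet> (Q *v x)}"
    unfolding psd_def by (auto simp: vec_eq_iff transpose_def)
  ultimately show ?thesis by simp
qed

lemma psd_suminf: "summable f \<Longrightarrow> (\<And>n. psd (f n)) \<Longrightarrow> psd (suminf f :: real^'n^'n)"
proof -
  assume "summable f" and "\<And>n. psd (f n)"
  then have "psd (\<Sum>i<n. f i)" for n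
    by (induction n) (simp_all add: psd_add, simp add: psd_def transpose_def vec_eq_iff)
  then have "\<forall>\<^sub>F n in sequentially. (\<Sum>i<n. f i) \<in> {Q. psd Q}" by simp
  from Lim_in_closed_set[OF closed_psd this trivial_limit_sequentially summable_LIMSEQ[OF \<open>summable f\<close>]]
  show ?thesis by simp
qed

section \<open>Transfer operators\<close>

lemma linear_Er: "Er_converges A R \<Longrightarrow> linear (Er A R)"
proof (induction R)
  case (Chr c)
  show ?case
    by (auto intro!: linearI simp: matrix_add_ldistrib matrix_add_rdistrib scalar_matrix_assoc
        matrix_scalar_ac)
next
  case (Cat R1 R2)
  then show ?case using linear_compose[of "Er A R2" "Er A R1"] by (simp add: o_def)
next
  case (Alt R1 R2)
  then show ?case by (simp add: linear_compose_add)
next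
  case (Star S)
  have "linear (Er A S ^^ n)" for n
    using Star by (induction n) (simp_all add: linear_id linear_compose)
  moreover have "summable (\<lambda>n. (Er A S ^^ n) Q)" for Q using Star.prems by simp
  ultimately show ?case
    by (auto intro!: linearI simp: linear_add linear_scale suminf_add[symmetric] suminf_scaleR_right[symmetric])
qed

lemma psd_Er: "Er_converges A R \<Longrightarrow> psd Q \<Longrightarrow> psd (Er A R Q)"
proof (induction R arbitrary: Q)
  case (Star S)
  have "psd ((Er A S ^^ n) Q)" for n
    using Star by (induction n) simp_all
  then show ?case using Star.prems by (simp add: psd_suminf)
qed (simp_all add: psd_congruence psd_add)

lemma Er_Star_unfold:
  assumes "Er_converges A (Star S)"
  shows "Er A (Star S) Q = Q + Er A S (Er A (Star S) Q)"
proof -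
  have sums: "summable (\<lambda>n. (Er A S ^^ n) Q)" using assms by simp
  have "bounded_linear (Er A S)" using linear_Er[of A S] assms by (simp add: linear_linear)
  from bounded_linear.suminf[OF this sums] suminf_split_head[OF sums]
  show ?thesis by simp
qed

lemma Astr_append: "Astr A (s @ t) = Astr A s ** Astr A t"
  by (induction s) (simp_all add: Astr_def matrix_mul_assoc)

lemma trace_congruence_swap:
  "trace ((transpose B ** Ql ** B) ** M) = trace (Ql ** (B ** M ** transpose (B::real^'n^'n)))"
  by (metis matrix_mul_assoc trace_mul_sym)

lemma Ptilde_append: "Ptilde A (s @ t) Ql Qr = Ptilde A t (El_str A s Ql) Qr"
  unfolding Ptilde_def El_str_def trace_congruence_swap
  by (simp add: Astr_append matrix_transpose_mul matrix_mul_assoc)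

lemma Zf_El_str: "Zf A R (El_str A s Ql) Qr = Ptilde A s Ql (Er A R Qr)"
  unfolding Ptilde_def El_str_def Zf_def by (simp add: trace_congruence_swap)

lemma psd_El_str: "psd Ql \<Longrightarrow> psd (El_str A s Ql)"
  unfolding El_str_def using psd_congruence[of Ql "transpose (Astr A s)"] by simp

lemma Ptilde_nonneg: "psd Ql \<Longrightarrow> psd Qr \<Longrightarrow> 0 \<le> Ptilde A s Ql Qr"
  unfolding Ptilde_def by (intro trace_psd_mult_nonneg psd_congruence)

lemma Zf_nonneg: "Er_converges A R \<Longrightarrow> psd Ql \<Longrightarrow> psd Qr \<Longrightarrow> 0 \<le> Zf A R Ql Qr"
  unfolding Zf_def by (intro trace_psd_mult_nonneg psd_Er)

lemma Ptilde_Nil: "Ptilde A [] Ql Qr = trace (Ql ** Qr)"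
  by (simp add: Ptilde_def Astr_def)

lemma Zf_Alt: "Zf A (Alt R1 R2) Ql Qr = Zf A R1 Ql Qr + Zf A R2 Ql Qr"
  by (simp add: Zf_def matrix_add_ldistrib trace_add)

lemma Zf_Star:
  "Er_converges A (Star S) \<Longrightarrow> Zf A (Star S) Ql Qr = trace (Ql ** Qr) + Zf A (Cat S (Star S)) Ql Qr"
  unfolding Zf_def by (subst Er_Star_unfold) (simp_all add: matrix_add_ldistrib trace_add)

lemma psd_Er_minus_self:
  "Er_converges A S \<Longrightarrow> cnt S [] \<noteq> 0 \<Longrightarrow> psd Q \<Longrightarrow> psd (Er A S Q - Q)"
proof (induction S arbitrary: Q)
  case (Cat R1 R2)
  have "Er A (Cat R1 R2) Q - Q = (Er A R1 (Er A R2 Q) - Er A R2 Q) + (Er A R2 Q - Q)" by simp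
  moreover have "psd (Er A R1 (Er A R2 Q) - Er A R2 Q)" "psd (Er A R2 Q - Q)"
    using Cat psd_Er[of A R2 Q] by auto
  ultimately show ?case by (simp only: psd_add)
next
  case (Alt R1 R2)
  then consider "cnt R1 [] \<noteq> 0" | "cnt R2 [] \<noteq> 0" by fastforce
  then show ?case
  proof cases
    case 1
    have "Er A (Alt R1 R2) Q - Q = (Er A R1 Q - Q) + Er A R2 Q" by simp
    then show ?thesis using 1 Alt by (metis Er_converges.simps(3) psd_add psd_Er)
  next
    case 2
    have "Er A (Alt R1 R2) Q - Q = (Er A R2 Q - Q) + Er A R1 Q" by simp
    then show ?thesis using 2 Alt by (metis Er_converges.simps(3) psd_add psd_Er)
  qed
next
  case (Star S)
  have "Er A (Star S) Q - Q = Er A S (Er A (Star S) Q)"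
    using Er_Star_unfold[OF Star.prems(1)] by (metis add_diff_cancel_left')
  then show ?case using Star.prems psd_Er by (metis Er_converges.simps(4))
qed simp

text \<open>If \<open>S\<close> matched the empty string, every term \<open>(Er A S ^^ n) (mat 1)\<close> of the series for
  \<open>Er A (Star S) (mat 1)\<close> would dominate \<open>mat 1\<close>, so the terms could not tend to \<open>0\<close>.\<close>

lemma Er_converges_Star_imp_cnt_Nil:
  fixes A :: "'c \<Rightarrow> real^'n^'n"
  assumes conv: "Er_converges A (Star S)"
  shows "cnt S [] = 0"
proof (rule ccontr)
  assume nil: "cnt S [] \<noteq> 0"
  have S: "Er_converges A S" using conv by simp
  define f where "f n = (Er A S ^^ n) (mat 1 :: real^'n^'n)" for n
  have "psd (f n)" for n
    unfolding f_def by (induction n) (simp_all add: psd_mat1 psd_Er[OF S])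
  then have ge: "psd (f n - mat 1)" for n
  proof (induction n)
    case (Suc n)
    have "f (Suc n) - mat 1 = (Er A S (f n) - f n) + (f n - mat 1)" by (simp add: f_def)
    with Suc psd_Er_minus_self[OF S nil] show ?case by (metis psd_add)
  qed (simp add: f_def psd_def transpose_def vec_eq_iff)
  fix i :: 'n
  have "1 \<le> f n $ i $ i" for n using psd_diag_nonneg[OF ge[of n], of i] by (simp add: mat_def)
  moreover have "summable f" using conv by (simp add: f_def[abs_def])
  then have "(\<lambda>n. f n $ i $ i) \<longlonglongrightarrow> 0 $ i $ i"
    by (intro tendsto_vec_nth summable_LIMSEQ_zero)
  ultimately have "1 \<le> (0::real^'n^'n) $ i $ i" by (intro LIMSEQ_le_const) auto
  then show False by simp
qed

section \<open>Match counts of a Kleene star\<close>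

definition factorizations :: "nat \<Rightarrow> 'a list \<Rightarrow> 'a list list set" where
  "factorizations n t = {ss. length ss = n \<and> concat ss = t}"

lemma finite_factorizations: "finite (factorizations n t)"
proof (rule finite_subset)
  let ?X = "{xs. set xs \<subseteq> set t \<and> length xs \<le> length t}"
  show "factorizations n t \<subseteq> {ss. set ss \<subseteq> ?X \<and> length ss \<le> n}"
  proof
    fix ss assume "ss \<in> factorizations n t"
    then have ss: "length ss = n" "concat ss = t" by (auto simp: factorizations_def)
    have "set x \<subseteq> set t \<and> length x \<le> length t" if "x \<in> set ss" for x
    proof -
      from that obtain a b where "ss = a @ x # b" by (meson split_list)
      with ss show ?thesis by auto
    qed
    with ss show "ss \<in> {ss. set ss \<subseteq> ?X \<and> length ss \<le> n}" by auto
  qed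
  show "finite {ss. set ss \<subseteq> ?X \<and> length ss \<le> n}"
    by (intro finite_lists_length_le) (simp_all add: finite_lists_length_le)
qed

lemma factorizations_Suc:
  "factorizations (Suc n) t
     = (\<lambda>(i, ss). take i t # ss) ` (SIGMA i:{0..length t}. factorizations n (drop i t))"
proof (intro set_eqI iffI)
  fix ss assume "ss \<in> factorizations (Suc n) t"
  then obtain x xs where ss: "ss = x # xs" "length xs = n" "concat (x # xs) = t"
    by (cases ss) (auto simp: factorizations_def)
  then have "x = take (length x) t" "concat xs = drop (length x) t" "length x \<le> length t" by auto
  then show "ss \<in> (\<lambda>(i, ss). take i t # ss) ` (SIGMA i:{0..length t}. factorizations n (drop i t))"
    using ss by (auto simp: factorizations_def image_iff intro!: bexI[of _ "(length x, xs)"])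
qed (auto simp: factorizations_def)

lemma inj_on_take_Cons:
  "inj_on (\<lambda>(i, ss). take i t # ss) (SIGMA i:{0..length t}. F i)"
  by (rule inj_onI) (auto simp: min_def split: if_splits dest: arg_cong[of _ _ length])

lemma cnt_Star_unfold:
  "cnt (Star S) s = (if s = [] then 1 else 0) + cnt (Cat S (Star S)) s"
proof -
  define g where "g n t = (\<Sum>ss\<in>factorizations n t. prod_list (map (cnt S) ss))" for n t
  have cnt_Star: "cnt (Star S) t = (\<Sum>n. g n t)" for t by (simp add: g_def factorizations_def)
  have "g (Suc n) t = (\<Sum>i\<in>{0..length t}. cnt S (take i t) * g n (drop i t))" for n t
  proof -
    have "g (Suc n) t = (\<Sum>(i, ss)\<in>(SIGMA i:{0..length t}. factorizations n (drop i t)).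
        prod_list (map (cnt S) (take i t # ss)))"
      unfolding g_def factorizations_Suc by (subst sum.reindex[OF inj_on_take_Cons]) (simp add: case_prod_beta)
    also have "\<dots> = (\<Sum>i\<in>{0..length t}. \<Sum>ss\<in>factorizations n (drop i t).
        cnt S (take i t) * prod_list (map (cnt S) ss))"
      by (subst sum.Sigma) (auto simp: finite_factorizations)
    finally show ?thesis by (simp add: g_def sum_distrib_left)
  qed
  then have "(\<Sum>n. g (Suc n) s) = (\<Sum>i\<in>{0..length s}. \<Sum>n. cnt S (take i s) * g n (drop i s))"
    by (simp add: suminf_sum summableI)
  also have "\<dots> = cnt (Cat S (Star S)) s"
    by (simp only: ennreal_suminf_cmult cnt_Star cnt.simps(2))
  finally have tail: "(\<Sum>n. g (Suc n) s) = cnt (Cat S (Star S)) s" .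
  have "(\<lambda>n. g n s) sums ((\<Sum>n. g (Suc n) s) + g 0 s)"
    by (rule sums_Suc[OF summable_sums[OF summableI]])
  then have head: "(\<Sum>n. g n s) = g 0 s + (\<Sum>n. g (Suc n) s)"
    by (simp add: sums_unique[symmetric] add.commute)
  have "factorizations 0 s = (if s = [] then {[]} else {})" by (auto simp: factorizations_def)
  then have "g 0 s = (if s = [] then 1 else 0)" by (simp add: g_def)
  with head tail show ?thesis by (simp only: cnt_Star[of s])
qed

section \<open>The law of SAMPLE\<close>

lemma spmf_bind_bernoulli_mix:
  fixes a b :: real
  assumes "0 \<le> a" "0 \<le> b"
  shows "ennreal (a + b) * ennreal (spmf (bind_spmf (spmf_of_pmf (bernoulli_pmf (a / (a + b))))
            (\<lambda>c. if c then p else q)) x)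
       = ennreal a * ennreal (spmf p x) + ennreal b * ennreal (spmf q x)"
proof (cases "a + b = 0")
  case True
  with assms show ?thesis by simp
next
  case False
  with assms have ab: "0 < a + b" by simp
  let ?M = "bind_spmf (spmf_of_pmf (bernoulli_pmf (a / (a + b)))) (\<lambda>c. if c then p else q)"
  have "0 \<le> a / (a + b)" "a / (a + b) \<le> 1" "1 - a / (a + b) = b / (a + b)"
    using assms ab by (simp_all add: field_simps)
  then have "ennreal (spmf ?M x) = ennreal (a / (a + b)) * ennreal (spmf p x) + ennreal (b / (a + b)) * ennreal (spmf q x)"
    unfolding ennreal_spmf_bind measure_spmf_spmf_of_pmf by (simp add: ac_simps)
  then have "ennreal (a + b) * ennreal (spmf ?M x)
      = ennreal (a + b) * ennreal (a / (a + b)) * ennreal (spmf p x)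
        + ennreal (a + b) * ennreal (b / (a + b)) * ennreal (spmf q x)"
    by (simp add: distrib_left mult.assoc del: ennreal_plus)
  also have "ennreal (a + b) * ennreal (a / (a + b)) = ennreal a"
    using assms ab by (simp add: ennreal_mult[symmetric] del: ennreal_plus)
  also have "ennreal (a + b) * ennreal (b / (a + b)) = ennreal b"
    using assms ab by (simp add: ennreal_mult[symmetric] del: ennreal_plus)
  finally show ?thesis .
qed

lemma spmf_map_append:
  "spmf (map_spmf ((@) u) p) s = (if take (length u) s = u then spmf p (drop (length u) s) else 0)"
proof (cases "take (length u) s = u")
  case True
  then have "spmf (map_spmf ((@) u) p) (u @ drop (length u) s) = spmf p (drop (length u) s)"
    by (intro spmf_map_inj') (simp add: inj_def)
  with True show ?thesis by (metis append_take_drop_id)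
next
  case False
  then have "s \<notin> (@) u ` set_spmf p" by auto
  with False show ?thesis by (simp add: spmf_map_outside)
qed

lemma ennreal_spmf_bind_append:
  "ennreal (spmf (bind_spmf p (\<lambda>u. map_spmf ((@) u) (f u))) s)
     = (\<Sum>i\<in>{0..length s}. ennreal (spmf p (take i s)) * ennreal (spmf (f (take i s)) (drop i s)))"
proof -
  let ?g = "\<lambda>u. ennreal (spmf p u) * ennreal (spmf (map_spmf ((@) u) (f u)) s)"
  have inj: "inj_on (\<lambda>i. take i s) {0..length s}"
    by (rule inj_onI) (metis atLeastAtMost_iff length_take min.absorb2)
  have "ennreal (spmf (bind_spmf p (\<lambda>u. map_spmf ((@) u) (f u))) s) = (\<integral>\<^sup>+u. ?g u \<partial>count_space UNIV)"
    by (simp only: ennreal_spmf_bind nn_integral_measure_spmf)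
  also have "\<dots> = (\<Sum>u\<in>(\<lambda>i. take i s) ` {0..length s}. ?g u)"
  proof (rule nn_integral_count_space')
    show "?g u = 0" if "u \<notin> (\<lambda>i. take i s) ` {0..length s}" for u
    proof -
      have "take (length u) s \<noteq> u"
      proof
        assume prefix: "take (length u) s = u"
        then have "length (take (length u) s) = length u" by simp
        then have "length u \<le> length s" by simp
        with prefix have "u \<in> (\<lambda>i. take i s) ` {0..length s}" by (intro image_eqI[of _ _ "length u"]) auto
        with that show False ..
      qed
      then show ?thesis by (simp add: spmf_map_append)
    qed
  qed simp_all
  also have "\<dots> = (\<Sum>i\<in>{0..length s}. ?g (take i s))" by (rule sum.reindex[OF inj, unfolded o_def])
  also have "\<dots> = (\<Sum>i\<in>{0..length s}. ennreal (spmf p (take i s)) * ennreal (spmf (f (take i s)) (drop i s)))"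
    by (rule sum.cong) (auto simp: spmf_map_append min_def)
  finally show ?thesis .
qed

lemma sample_Chr: "sample A (Chr c) Ql Qr = return_spmf [c]"
  by (subst sample.simps) simp

lemma sample_Cat:
  "sample A (Cat R1 R2) Ql Qr = bind_spmf (sample A R1 Ql (Er A R2 Qr))
     (\<lambda>u. map_spmf ((@) u) (sample A R2 (El_str A u Ql) Qr))"
  by (subst sample.simps) (simp add: map_spmf_conv_bind_spmf)

lemma sample_Alt:
  "sample A (Alt R1 R2) Ql Qr = bind_spmf (spmf_of_pmf (bernoulli_pmf (Zf A R1 Ql Qr / Zf A (Alt R1 R2) Ql Qr)))
     (\<lambda>b. if b then sample A R1 Ql Qr else sample A R2 Ql Qr)"
  by (subst sample.simps) simp

lemma sample_Star:
  "sample A (Star S) Ql Qr = bind_spmf (spmf_of_pmf (bernoulli_pmf (trace (Ql ** Qr) / Zf A (Star S) Ql Qr)))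
     (\<lambda>halt. if halt then return_spmf [] else sample A (Cat S (Star S)) Ql Qr)"
  by (subst sample.simps) simp

definition sample_law :: "('c \<Rightarrow> real^'n^'n) \<Rightarrow> 'c regex \<Rightarrow> 'c list \<Rightarrow> bool" where
  "sample_law A R s \<longleftrightarrow> (\<forall>Ql Qr. psd Ql \<longrightarrow> psd Qr \<longrightarrow>
     ennreal (Zf A R Ql Qr) * ennreal (spmf (sample A R Ql Qr) s) = cnt R s * ennreal (Ptilde A s Ql Qr))"

lemma sample_law_Chr: "sample_law A (Chr c) s"
  by (auto simp: sample_law_def sample_Chr Ptilde_def Zf_def Astr_def matrix_mul_assoc)

lemma sample_law_Alt:
  fixes A :: "'c \<Rightarrow> real^'n^'n"
  assumes "Er_converges A R1" "Er_converges A R2" "sample_law A R1 s" "sample_law A R2 s"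
  shows "sample_law A (Alt R1 R2) s"
  unfolding sample_law_def
proof (intro allI impI)
  fix Ql Qr :: "real^'n^'n"
  assume Ql: "psd Ql" and Qr: "psd Qr"
  have "ennreal (Zf A (Alt R1 R2) Ql Qr) * ennreal (spmf (sample A (Alt R1 R2) Ql Qr) s)
      = ennreal (Zf A R1 Ql Qr) * ennreal (spmf (sample A R1 Ql Qr) s)
        + ennreal (Zf A R2 Ql Qr) * ennreal (spmf (sample A R2 Ql Qr) s)"
    unfolding sample_Alt Zf_Alt
    by (intro spmf_bind_bernoulli_mix Zf_nonneg assms(1,2) Ql Qr)
  also have "\<dots> = cnt (Alt R1 R2) s * ennreal (Ptilde A s Ql Qr)"
    using assms(3,4) Ql Qr by (simp add: sample_law_def distrib_right)
  finally show "ennreal (Zf A (Alt R1 R2) Ql Qr) * ennreal (spmf (sample A (Alt R1 R2) Ql Qr) s)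
      = cnt (Alt R1 R2) s * ennreal (Ptilde A s Ql Qr)" .
qed

lemma sample_law_Cat:
  fixes A :: "'c \<Rightarrow> real^'n^'n"
  assumes R2: "Er_converges A R2"
    and law1: "\<And>t. sample_law A R1 t"
    and law2: "\<And>i. i \<le> length s \<Longrightarrow> cnt R1 (take i s) \<noteq> 0 \<Longrightarrow> sample_law A R2 (drop i s)"
  shows "sample_law A (Cat R1 R2) s"
  unfolding sample_law_def
proof (intro allI impI)
  fix Ql Qr :: "real^'n^'n"
  assume Ql: "psd Ql" and Qr: "psd Qr"
  define Z where "Z = Zf A R1 Ql (Er A R2 Qr)"
  have summand: "ennreal Z * (ennreal (spmf (sample A R1 Ql (Er A R2 Qr)) (take i s))
        * ennreal (spmf (sample A R2 (El_str A (take i s) Ql) Qr) (drop i s)))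
      = cnt R1 (take i s) * cnt R2 (drop i s) * ennreal (Ptilde A s Ql Qr)"
    if i: "i \<le> length s" for i
  proof -
    define u v where "u = take i s" and "v = drop i s"
    define Ql' where "Ql' = El_str A u Ql"
    have "ennreal Z * (ennreal (spmf (sample A R1 Ql (Er A R2 Qr)) u) * ennreal (spmf (sample A R2 Ql' Qr) v))
        = (ennreal Z * ennreal (spmf (sample A R1 Ql (Er A R2 Qr)) u)) * ennreal (spmf (sample A R2 Ql' Qr) v)"
      by (simp only: mult.assoc)
    also have "ennreal Z * ennreal (spmf (sample A R1 Ql (Er A R2 Qr)) u) = cnt R1 u * ennreal (Zf A R2 Ql' Qr)"
      using law1[of u] Ql psd_Er[OF R2 Qr] by (simp add: sample_law_def Z_def Ql'_def Zf_El_str)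
    also have "cnt R1 u * ennreal (Zf A R2 Ql' Qr) * ennreal (spmf (sample A R2 Ql' Qr) v)
        = cnt R1 u * (cnt R2 v * ennreal (Ptilde A v Ql' Qr))"
      using law2[OF i] psd_El_str[OF Ql, of A u] Qr
      by (cases "cnt R1 u = 0") (auto simp: sample_law_def u_def v_def Ql'_def mult.assoc)
    also have "Ptilde A v Ql' Qr = Ptilde A s Ql Qr"
      by (simp add: u_def v_def Ql'_def Ptilde_append[symmetric])
    finally show ?thesis by (simp add: u_def v_def Ql'_def mult.assoc)
  qed
  have "ennreal Z * ennreal (spmf (sample A (Cat R1 R2) Ql Qr) s)
      = (\<Sum>i\<in>{0..length s}. cnt R1 (take i s) * cnt R2 (drop i s) * ennreal (Ptilde A s Ql Qr))"
    unfolding sample_Cat ennreal_spmf_bind_append sum_distrib_left by (rule sum.cong) (simp_all add: summand)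
  then show "ennreal (Zf A (Cat R1 R2) Ql Qr) * ennreal (spmf (sample A (Cat R1 R2) Ql Qr) s)
      = cnt (Cat R1 R2) s * ennreal (Ptilde A s Ql Qr)"
    by (simp add: Z_def Zf_def sum_distrib_right)
qed

lemma sample_law_Star:
  fixes A :: "'c \<Rightarrow> real^'n^'n"
  assumes conv: "Er_converges A (Star S)" and law: "\<And>t. sample_law A S t"
  shows "sample_law A (Star S) s"
proof (induction s rule: length_induct)
  case (1 s)
  have "sample_law A (Cat S (Star S)) s"
  proof (rule sample_law_Cat[OF conv law])
    fix i assume "i \<le> length s" "cnt S (take i s) \<noteq> 0"
    moreover have "cnt S [] = 0" using Er_converges_Star_imp_cnt_Nil[OF conv] .
    ultimately have "length (drop i s) < length s" by (cases i) auto
    with 1 show "sample_law A (Star S) (drop i s)" by blast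
  qed
  show ?case
    unfolding sample_law_def
  proof (intro allI impI)
    fix Ql Qr :: "real^'n^'n"
    assume Ql: "psd Ql" and Qr: "psd Qr"
    have "ennreal (Zf A (Star S) Ql Qr) * ennreal (spmf (sample A (Star S) Ql Qr) s)
        = ennreal (trace (Ql ** Qr)) * ennreal (spmf (return_spmf []) s)
          + ennreal (Zf A (Cat S (Star S)) Ql Qr) * ennreal (spmf (sample A (Cat S (Star S)) Ql Qr) s)"
      unfolding sample_Star Zf_Star[OF conv]
      using conv Ql Qr by (intro spmf_bind_bernoulli_mix trace_psd_mult_nonneg Zf_nonneg) simp_all
    also have "\<dots> = cnt (Star S) s * ennreal (Ptilde A s Ql Qr)"
      using \<open>sample_law A (Cat S (Star S)) s\<close> Ql Qr
      by (simp only: sample_law_def cnt_Star_unfold) (auto simp: distrib_right Ptilde_Nil)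
    finally show "ennreal (Zf A (Star S) Ql Qr) * ennreal (spmf (sample A (Star S) Ql Qr) s)
        = cnt (Star S) s * ennreal (Ptilde A s Ql Qr)" .
  qed
qed

lemma Er_converges_imp_sample_law: "Er_converges A R \<Longrightarrow> sample_law A R s"
proof (induction R arbitrary: s)
  case (Chr c) show ?case by (rule sample_law_Chr)
next
  case (Cat R1 R2) then show ?case by (intro sample_law_Cat) auto
next
  case (Alt R1 R2) then show ?case by (intro sample_law_Alt) auto
next
  case (Star S) then show ?case by (intro sample_law_Star) auto
qed

theorem lemma1:
  fixes A :: "'c::finite \<Rightarrow> real^'n^'n"
    and R :: "'c regex"
    and Ql Qr :: "real^'n^'n"
    and s :: "'c list"
  assumes "Er_converges A R"
    and "psd Ql" and "psd Qr"
    and "Zf A R Ql Qr > 0"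
  shows "ennreal (spmf (sample A R Ql Qr) s) = cnt R s * ennreal (Ptilde A s Ql Qr / Zf A R Ql Qr)"
proof -
  define Z where "Z = Zf A R Ql Qr"
  have Z: "0 < Z" using assms(4) by (simp add: Z_def)
  have "ennreal (spmf (sample A R Ql Qr) s) = ennreal (1 / Z) * (ennreal Z * ennreal (spmf (sample A R Ql Qr) s))"
    using Z by (simp add: mult.assoc[symmetric] ennreal_mult[symmetric])
  also have "\<dots> = ennreal (1 / Z) * (cnt R s * ennreal (Ptilde A s Ql Qr))"
    using Er_converges_imp_sample_law[OF assms(1)] assms(2,3) by (simp add: sample_law_def Z_def)
  also have "\<dots> = cnt R s * ennreal (Ptilde A s Ql Qr / Z)"
    using Z Ptilde_nonneg[OF assms(2,3), of A s] by (simp add: ennreal_mult[symmetric] ac_simps)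
  finally show ?thesis by (simp add: Z_def)
qed

end
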